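(* Let $M,N$ be matroids on a common set $E$ satisfying $\mathsf{cond}^+(M,N)$. Let $e\in E$, let $W\subseteq E\setminus\{e\}$ be an $(M/e,N/e)$-wave, and let $B\subseteq W$ be a base of $(M/e)\upharpoonright W$ that is independent in $(N/e).W$. Then $B\in B(M/e,N/e,W)$; that is, $B$ is also spanning in $N.W$.
   Context: Matroids are possibly infinite. $M^*$ is the dual, $M\upharpoonright X$ restriction, $M/X:=(M^*\upharpoonright(E\setminus X))^*$, $M/e:=M/\{e\}$, $M.X:=M/(E\setminus X)$. A loop is an element $e$ with $\{e\}$ dependent; $r(K)=0$ means the empty set is a base of $K$. $W$ is an $(M,N)$-wave if $M\upharpoonright W$ has a base independent in $N.W$; the union of all $(M,N)$-waves is a wave, denoted $W(M,N)$. $\mathsf{cond}^+(M,N)$: $W(M,N)$ consists of $M$-loops and $r(N.W(M,N))=0$. $B(M,N,X)$ denotes the set of common bases of $M\upharpoonright X$ and $N.X$. *)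

theory Defs
  imports Main
begin

type_synonym 'a matroid = "'a set \<times> ('a set \<Rightarrow> bool)"

definition ground :: "'a matroid \<Rightarrow> 'a set" where
  "ground M = fst M"

definition indep :: "'a matroid \<Rightarrow> 'a set \<Rightarrow> bool" where
  "indep M X = snd M X"

definition basis :: "'a matroid \<Rightarrow> 'a set \<Rightarrow> bool" where
  "basis M B \<longleftrightarrow> indep M B \<and> (\<forall>I. indep M I \<and> B \<subseteq> I \<longrightarrow> I = B)"

text \<open>Independence axioms for infinite matroids (Bruhn, Diestel, Kriesell, Pendavingh, Wollan):
(I1), (I2), (I3) and (IM).\<close>
definition matroid :: "'a matroid \<Rightarrow> bool" where
  "matroid M \<longleftrightarrow>
     (\<forall>I. indep M I \<longrightarrow> I \<subseteq> ground M) \<and>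
     indep M {} \<and>
     (\<forall>I J. indep M J \<and> I \<subseteq> J \<longrightarrow> indep M I) \<and>
     (\<forall>I J. indep M I \<and> \<not> basis M I \<and> basis M J \<longrightarrow>
        (\<exists>x \<in> J - I. indep M (insert x I))) \<and>
     (\<forall>I X. indep M I \<and> I \<subseteq> X \<and> X \<subseteq> ground M \<longrightarrow>
        (\<exists>J. indep M J \<and> I \<subseteq> J \<and> J \<subseteq> X \<and>
              (\<forall>K. indep M K \<and> J \<subseteq> K \<and> K \<subseteq> X \<longrightarrow> K = J)))"

text \<open>Dual: the bases of \<open>M\<^sup>*\<close> are the complements of bases of \<open>M\<close>.\<close>
definition dual :: "'a matroid \<Rightarrow> 'a matroid" where
  "dual M = (ground M, \<lambda>X. X \<subseteq> ground M \<and> (\<exists>B. basis M B \<and> X \<inter> B = {}))"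

definition restrict :: "'a matroid \<Rightarrow> 'a set \<Rightarrow> 'a matroid" where
  "restrict M X = (X \<inter> ground M, \<lambda>I. indep M I \<and> I \<subseteq> X)"

definition contract :: "'a matroid \<Rightarrow> 'a set \<Rightarrow> 'a matroid" where
  "contract M X = dual (restrict (dual M) (ground M - X))"

definition contract_to :: "'a matroid \<Rightarrow> 'a set \<Rightarrow> 'a matroid" where
  "contract_to M X = contract M (ground M - X)"

definition loop :: "'a matroid \<Rightarrow> 'a \<Rightarrow> bool" where
  "loop M e \<longleftrightarrow> e \<in> ground M \<and> \<not> indep M {e}"

definition wave :: "'a matroid \<Rightarrow> 'a matroid \<Rightarrow> 'a set \<Rightarrow> bool" where
  "wave M N W \<longleftrightarrow> W \<subseteq> ground M \<and>
     (\<exists>B. basis (restrict M W) B \<and> indep (contract_to N W) B)"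

definition wave_union :: "'a matroid \<Rightarrow> 'a matroid \<Rightarrow> 'a set" where
  "wave_union M N = \<Union> {W. wave M N W}"

text \<open>\<open>cond\<^sup>+(M,N)\<close>: \<open>W(M,N)\<close> consists of \<open>M\<close>-loops and \<open>r(N.W(M,N)) = 0\<close>,
i.e. the empty set is a base of \<open>N.W(M,N)\<close>.\<close>
definition cond_plus :: "'a matroid \<Rightarrow> 'a matroid \<Rightarrow> bool" where
  "cond_plus M N \<longleftrightarrow> (\<forall>x \<in> wave_union M N. loop M x) \<and>
     basis (contract_to N (wave_union M N)) {}"

definition common_bases :: "'a matroid \<Rightarrow> 'a matroid \<Rightarrow> 'a set \<Rightarrow> 'a set set" where
  "common_bases M N X = {B. basis (restrict M X) B \<and> basis (contract_to N X) B}"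

end

theory Submission
  imports Defs
begin

text \<open>Fix a base \<open>J\<close> of \<open>E - W\<close> in \<open>N\<close>; then \<open>N.W = N / (E - W)\<close>, the set \<open>B\<close> is independent in
\<open>N.W\<close> iff \<open>B \<union> J\<close> is independent in \<open>N\<close>, and we must show that no \<open>x \<in> W - B\<close> can be added to
\<open>B \<union> J\<close>. Consider the exchange graph of \<open>B\<close> with respect to \<open>M\<close> and \<open>N.W\<close>, whose sources are the
\<open>y\<close> with \<open>B + y\<close> independent in \<open>M\<close> and whose sinks are the \<open>x\<close> with \<open>B + x\<close> independent
in \<open>N.W\<close>.

If a sink is reachable, exchanging along a shortest path gives a set \<open>B'\<close> that is independent
in \<open>N.W\<close> and, because \<open>B\<close> together with a base of \<open>{e}\<close> spans \<open>W\<close> in \<open>M\<close>, a base of \<open>M \<upharpoonright> W\<close>.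
So \<open>W\<close> is an \<open>(M,N)\<close>-wave containing the first vertex of the path, which is not a loop of \<open>M\<close>;
this contradicts \<open>cond\<^sup>+(M,N)\<close>. Otherwise the vertices of \<open>W\<close> that are not reachable form an
\<open>(M,N)\<close>-wave \<open>A\<close>. By \<open>cond\<^sup>+(M,N)\<close> it consists of loops, so it misses \<open>B\<close>; and since
\<open>N.W(M,N)\<close> has rank \<open>0\<close>, every element of \<open>A\<close> is spanned in \<open>N\<close> by the base \<open>B \<union> J\<close> of \<open>E - A\<close>.
The reachable elements of \<open>W - B\<close> are not sinks.\<close>

subsection \<open>Span and fundamental circuits\<close>

definition basis_in :: "'a matroid \<Rightarrow> 'a set \<Rightarrow> 'a set \<Rightarrow> bool" where
  "basis_in M X J \<longleftrightarrow> indep M J \<and> J \<subseteq> X \<and> (\<forall>K. indep M K \<and> J \<subseteq> K \<and> K \<subseteq> X \<longrightarrow> K = J)"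

definition in_span :: "'a matroid \<Rightarrow> 'a set \<Rightarrow> 'a \<Rightarrow> bool" where
  "in_span M I w \<longleftrightarrow> w \<in> I \<or> \<not> indep M (insert w I)"

text \<open>The fundamental circuit of \<open>z\<close> with respect to \<open>I\<close>, with \<open>z\<close> itself left out.\<close>
definition fund_circuit :: "'a matroid \<Rightarrow> 'a \<Rightarrow> 'a set \<Rightarrow> 'a set" where
  "fund_circuit M z I = {x \<in> I. indep M (insert z (I - {x}))}"

lemma basis_in_indep: "basis_in M X J \<Longrightarrow> indep M J"
  unfolding basis_in_def by blast

lemma basis_in_subset: "basis_in M X J \<Longrightarrow> J \<subseteq> X"
  unfolding basis_in_def by blast

lemma basis_inD: "basis_in M X J \<Longrightarrow> x \<in> X \<Longrightarrow> x \<notin> J \<Longrightarrow> \<not> indep M (insert x J)"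
  unfolding basis_in_def by blast

lemma in_span_if_basis_in: "basis_in M X J \<Longrightarrow> x \<in> X \<Longrightarrow> in_span M J x"
  unfolding in_span_def basis_in_def by blast

lemma fund_circuit_subset: "fund_circuit M z I \<subseteq> I"
  unfolding fund_circuit_def by blast

context
  fixes M :: "'a matroid"
  assumes M: "matroid M"
begin

lemma matroidD:
  "\<forall>I. indep M I \<longrightarrow> I \<subseteq> ground M" "indep M {}"
  "\<forall>I J. indep M J \<and> I \<subseteq> J \<longrightarrow> indep M I"
  "\<forall>I J. indep M I \<and> \<not> basis M I \<and> basis M J \<longrightarrow> (\<exists>x \<in> J - I. indep M (insert x I))"
  using M unfolding matroid_def by simp_all

lemma indep_subset_ground: "indep M I \<Longrightarrow> I \<subseteq> ground M"
  using matroidD(1) by simp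

lemma indep_empty: "indep M {}"
  using matroidD(2) .

lemma indep_subset: "indep M J \<Longrightarrow> I \<subseteq> J \<Longrightarrow> indep M I"
  using matroidD(3) by metis

lemma indep_augment: "indep M I \<Longrightarrow> \<not> basis M I \<Longrightarrow> basis M J \<Longrightarrow> \<exists>x\<in>J - I. indep M (insert x I)"
  using matroidD(4) by metis

lemma basis_in_extend:
  assumes "indep M I" "I \<subseteq> X" "X \<subseteq> ground M"
  shows "\<exists>J. basis_in M X J \<and> I \<subseteq> J"
proof -
  obtain J where "indep M J \<and> I \<subseteq> J \<and> J \<subseteq> X \<and> (\<forall>K. indep M K \<and> J \<subseteq> K \<and> K \<subseteq> X \<longrightarrow> K = J)"
    using M assms unfolding matroid_def by meson
  then show ?thesis unfolding basis_in_def by blast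
qed

lemma basis_inI:
  assumes J: "indep M J" "J \<subseteq> X" and max: "\<And>x. x \<in> X \<Longrightarrow> x \<notin> J \<Longrightarrow> \<not> indep M (insert x J)"
  shows "basis_in M X J"
proof -
  have "K = J" if K: "indep M K" "J \<subseteq> K" "K \<subseteq> X" for K
  proof (rule ccontr)
    assume "K \<noteq> J"
    then obtain x where "x \<in> K" "x \<notin> J" using K by blast
    moreover have "indep M (insert x J)"
      by (rule indep_subset[OF K(1)]) (use K \<open>x \<in> K\<close> in blast)
    ultimately show False using max K by blast
  qed
  then show ?thesis unfolding basis_in_def using J by blast
qed

lemma basis_iff_basis_in_ground: "basis M B \<longleftrightarrow> basis_in M (ground M) B"
  unfolding basis_def basis_in_def using indep_subset_ground by (meson order_refl)

lemma basis_subset_ground: "basis M B \<Longrightarrow> B \<subseteq> ground M"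
  unfolding basis_def using indep_subset_ground by blast

lemma basis_if_spans_basis:
  assumes "indep M S" "basis M B" "\<And>x. x \<in> B \<Longrightarrow> x \<notin> S \<Longrightarrow> \<not> indep M (insert x S)"
  shows "basis M S"
  using indep_augment[OF assms(1) _ assms(2)] assms(3) by blast

lemma basis_exists: "\<exists>B. basis M B"
  using basis_in_extend[OF indep_empty] basis_iff_basis_in_ground by blast

lemma basis_extend_within:
  assumes I: "indep M I" "I \<subseteq> Y" and Y: "Y \<subseteq> ground M" and P: "basis M P"
    and span: "\<And>p. p \<in> P - Y \<Longrightarrow> in_span M I p"
  shows "\<exists>Q. basis M Q \<and> I \<subseteq> Q \<and> Q \<subseteq> Y"
proof -
  obtain Q where Q: "basis_in M Y Q" "I \<subseteq> Q" using basis_in_extend[OF I Y] by blast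
  have "basis M Q"
  proof (rule basis_if_spans_basis[OF basis_in_indep[OF Q(1)] P])
    fix p assume p: "p \<in> P" "p \<notin> Q"
    show "\<not> indep M (insert p Q)"
    proof (cases "p \<in> Y")
      case True then show ?thesis using basis_inD[OF Q(1)] p by blast
    next
      case False
      then have "\<not> indep M (insert p I)" using span p I(2) unfolding in_span_def by blast
      then show ?thesis using indep_subset[of "insert p Q"] Q(2) by blast
    qed
  qed
  then show ?thesis using Q(2) basis_in_subset[OF Q(1)] by blast
qed

lemma in_span_mono: "in_span M I w \<Longrightarrow> I \<subseteq> I' \<Longrightarrow> in_span M I' w"
  unfolding in_span_def using indep_subset[of "insert w I'" "insert w I"] by blast

text \<open>Without finiteness this needs the axiom (IM), to extend independent sets to bases inside
prescribed sets.\<close>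
lemma in_span_trans:
  assumes T: "indep M T" and K: "\<And>k. k \<in> K \<Longrightarrow> in_span M T k"
    and K0: "K0 \<subseteq> K" "indep M K0" and i: "in_span M K0 i"
  shows "in_span M T i"
proof (rule ccontr)
  assume not_span: "\<not> in_span M T i"
  then have iT: "i \<notin> T" and Ti: "indep M (insert i T)" unfolding in_span_def by auto
  define Z where "Z = T \<union> K \<union> {i}"
  obtain P0 where P0: "basis M P0" using basis_exists by blast
  have "\<exists>P. basis M P \<and> insert i T \<subseteq> P \<and> P \<subseteq> insert i T \<union> (ground M - Z)"
  proof (rule basis_extend_within[OF Ti _ _ P0])
    show "insert i T \<union> (ground M - Z) \<subseteq> ground M" using indep_subset_ground[OF Ti] by blast
    fix p assume "p \<in> P0 - (insert i T \<union> (ground M - Z))"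
    then have "p \<in> K" using basis_subset_ground[OF P0] unfolding Z_def by blast
    then show "in_span M (insert i T) p" using K in_span_mono[of T p "insert i T"] by blast
  qed blast
  then obtain P where P: "basis M P" "insert i T \<subseteq> P" "P \<subseteq> insert i T \<union> (ground M - Z)"
    by blast
  have "\<exists>Q. basis M Q \<and> K0 \<subseteq> Q \<and> Q \<subseteq> K0 \<union> T \<union> (P - Z)"
  proof (rule basis_extend_within[OF K0(2) _ _ P(1)])
    show "K0 \<union> T \<union> (P - Z) \<subseteq> ground M"
      using indep_subset_ground[OF K0(2)] indep_subset_ground[OF T] basis_subset_ground[OF P(1)]
      by blast
    fix p assume "p \<in> P - (K0 \<union> T \<union> (P - Z))"
    then have "p = i" using P(3) unfolding Z_def by blast
    then show "in_span M K0 p" using i by simp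
  qed blast
  then obtain Q where Q: "basis M Q" "Q \<subseteq> K0 \<union> T \<union> (P - Z)" by blast
  have R: "indep M (P - {i})" using P(1) indep_subset[of P "P - {i}"] unfolding basis_def by blast
  have "\<not> basis M (P - {i})"
  proof
    assume "basis M (P - {i})"
    then have "P = P - {i}" using P(1) unfolding basis_def by blast
    then show False using P(2) by blast
  qed
  then obtain x where x: "x \<in> Q - (P - {i})" "indep M (insert x (P - {i}))"
    using indep_augment[OF R _ Q(1)] by blast
  have "x \<in> K" "x \<notin> T" using x(1) Q(2) K0(1) P(2) iT unfolding Z_def by blast+
  then have "\<not> indep M (insert x T)" using K unfolding in_span_def by blast
  moreover have "insert x T \<subseteq> insert x (P - {i})" using P(2) iT by blast
  ultimately show False using x(2) indep_subset[of "insert x (P - {i})" "insert x T"] by blast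
qed

lemma basis_in_if_spans_basis_in:
  assumes S: "indep M S" "S \<subseteq> Z" and P: "basis_in M Z P" and span: "\<And>p. p \<in> P \<Longrightarrow> in_span M S p"
  shows "basis_in M Z S"
proof (rule basis_inI[OF S])
  fix q assume q: "q \<in> Z" "q \<notin> S"
  have "in_span M S q"
    using in_span_trans[OF S(1) span order_refl basis_in_indep[OF P] in_span_if_basis_in[OF P q(1)]] .
  then show "\<not> indep M (insert q S)" using q(2) unfolding in_span_def by blast
qed

lemma dependent_if_fund_circuit_subset:
  assumes I: "indep M I" and z: "\<not> indep M (insert z I)" and S: "S \<subseteq> I"
    and C: "fund_circuit M z I \<subseteq> S"
  shows "\<not> indep M (insert z S)"
proof
  assume Sz: "indep M (insert z S)"
  have "insert z I \<subseteq> ground M" using indep_subset_ground[OF Sz] indep_subset_ground[OF I] by blast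
  moreover have "insert z S \<subseteq> insert z I" using S by blast
  ultimately obtain P where P: "basis_in M (insert z I) P" "insert z S \<subseteq> P"
    using basis_in_extend[OF Sz] by blast
  have "P \<noteq> insert z I" using basis_in_indep[OF P(1)] z by blast
  then obtain x where x: "x \<in> I" "x \<notin> P" using basis_in_subset[OF P(1)] P(2) by blast
  have indep_Ix: "indep M (I - {x})" by (rule indep_subset[OF I]) blast
  have "\<not> basis_in M (insert z I) (I - {x})"
  proof
    assume "basis_in M (insert z I) (I - {x})"
    moreover have "indep M (insert x (I - {x}))" using I x(1) by (simp add: insert_absorb)
    moreover have "x \<in> insert z I" "x \<notin> I - {x}" using x(1) by auto
    ultimately show False using basis_inD[of M "insert z I" "I - {x}" x] by blast
  qed
  moreover have "basis_in M (insert z I) (I - {x})" if "\<forall>p\<in>P. in_span M (I - {x}) p"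
    using that by (intro basis_in_if_spans_basis_in[OF indep_Ix _ P(1)]) auto
  ultimately obtain p where p: "p \<in> P" "\<not> in_span M (I - {x}) p" by blast
  have "p = z"
  proof (rule ccontr)
    assume "p \<noteq> z"
    then have "p \<in> I - {x}" using p(1) x(2) basis_in_subset[OF P(1)] by blast
    then show False using p(2) unfolding in_span_def by blast
  qed
  then have "x \<in> fund_circuit M z I" using p x(1) unfolding in_span_def fund_circuit_def by blast
  then show False using C x P(2) by blast
qed

lemma fund_circuit_subset_if_dependent:
  assumes S: "S \<subseteq> I" and dep: "\<not> indep M (insert z S)"
  shows "fund_circuit M z I \<subseteq> S"
proof
  fix x assume x: "x \<in> fund_circuit M z I"
  show "x \<in> S"
  proof (rule ccontr)
    assume "x \<notin> S"
    then have "insert z S \<subseteq> insert z (I - {x})" using S by blast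
    moreover have "indep M (insert z (I - {x}))" using x unfolding fund_circuit_def by blast
    ultimately show False using dep indep_subset by blast
  qed
qed

lemma fund_circuit_eq:
  assumes I1: "indep M I1" "\<not> indep M (insert z I1)"
    and I2: "indep M I2" "\<not> indep M (insert z I2)"
    and sub: "fund_circuit M z I1 \<subseteq> I2"
  shows "fund_circuit M z I1 = fund_circuit M z I2"
proof (rule equalityI)
  have "\<not> indep M (insert z (fund_circuit M z I1))"
    by (rule dependent_if_fund_circuit_subset[OF I1 fund_circuit_subset order_refl])
  then show "fund_circuit M z I2 \<subseteq> fund_circuit M z I1"
    by (rule fund_circuit_subset_if_dependent[OF sub])
  then have "fund_circuit M z I2 \<subseteq> I1" using fund_circuit_subset[of M z I1] by blast
  moreover have "\<not> indep M (insert z (fund_circuit M z I2))"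
    by (rule dependent_if_fund_circuit_subset[OF I2 fund_circuit_subset order_refl])
  ultimately show "fund_circuit M z I1 \<subseteq> fund_circuit M z I2"
    by (rule fund_circuit_subset_if_dependent)
qed

end

subsection \<open>Simultaneous exchange\<close>

text \<open>The exchanges \<open>b i \<mapsto> z i\<close>, \<open>i < k\<close>, can be carried out simultaneously when \<open>z i\<close> may replace
\<open>b i\<close> but no earlier \<open>b j\<close>: the matroid form of the uniqueness of a triangular matching, which
is what makes shortest augmenting paths work.\<close>
definition triangular_exchange :: "'a matroid \<Rightarrow> 'a set \<Rightarrow> nat \<Rightarrow> (nat \<Rightarrow> 'a) \<Rightarrow> (nat \<Rightarrow> 'a) \<Rightarrow> bool" where
  "triangular_exchange M I k b z \<longleftrightarrow>
     (\<forall>i<k. b i \<in> I \<and> z i \<notin> I \<and> \<not> indep M (insert (z i) I) \<and> indep M (insert (z i) (I - {b i})) \<and>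
        (\<forall>j<i. \<not> indep M (insert (z i) (I - {b j}))))"

context
  fixes M :: "'a matroid"
  assumes M: "matroid M"
begin

lemma in_span_exchange:
  assumes I: "indep M I" and b: "b \<in> I" and z: "\<not> indep M (insert z I)"
    and Iz: "indep M (insert z (I - {b}))" and w: "in_span M I w"
  shows "in_span M (insert z (I - {b})) w"
proof (rule in_span_trans[OF M Iz _ order_refl I w])
  fix x assume x: "x \<in> I"
  show "in_span M (insert z (I - {b})) x"
  proof (cases "x = b")
    case True
    then have "insert x (insert z (I - {b})) = insert z I" using b by blast
    then show ?thesis using z unfolding in_span_def by simp
  next
    case False
    then show ?thesis using x unfolding in_span_def by blast
  qed
qed

lemma triangular_exchange_Suc:
  assumes I: "indep M I" and T: "triangular_exchange M I (Suc k) b z"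
  shows "triangular_exchange M (insert (z 0) (I - {b 0})) k (b \<circ> Suc) (z \<circ> Suc)"
proof -
  define I1 where "I1 = insert (z 0) (I - {b 0})"
  have I1: "indep M I1" using T unfolding triangular_exchange_def I1_def by blast
  have H: "b (Suc i) \<in> I" "z (Suc i) \<notin> I" "\<not> indep M (insert (z (Suc i)) I)"
    "indep M (insert (z (Suc i)) (I - {b (Suc i)}))" "\<not> indep M (insert (z (Suc i)) (I - {b 0}))"
    "\<And>j. j < i \<Longrightarrow> \<not> indep M (insert (z (Suc i)) (I - {b (Suc j)}))" if "i < k" for i
    using T that unfolding triangular_exchange_def by auto
  have b_in_I1: "b (Suc i) \<in> I1" if "i < k" for i
    using H(1,4,5)[OF that] unfolding I1_def by auto
  have not_indep_I1: "\<not> indep M (insert (z (Suc i)) I1)" if "i < k" for i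
  proof
    assume "indep M (insert (z (Suc i)) I1)"
    moreover have "insert (z (Suc i)) (I - {b 0}) \<subseteq> insert (z (Suc i)) I1" unfolding I1_def by blast
    ultimately show False using H(5)[OF that] indep_subset[OF M] by blast
  qed
  have fc: "fund_circuit M (z (Suc i)) I = fund_circuit M (z (Suc i)) I1" if "i < k" for i
  proof (rule fund_circuit_eq[OF M I H(3)[OF that] I1 not_indep_I1[OF that]])
    show "fund_circuit M (z (Suc i)) I \<subseteq> I1" using H(5)[OF that] unfolding fund_circuit_def I1_def by blast
  qed
  show ?thesis
    unfolding triangular_exchange_def I1_def[symmetric] o_def
  proof (intro allI impI conjI)
    fix i assume i: "i < k"
    show "b (Suc i) \<in> I1" using b_in_I1[OF i] .
    show "\<not> indep M (insert (z (Suc i)) I1)" using not_indep_I1[OF i] .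
    then show "z (Suc i) \<notin> I1" using I1 by (auto simp: insert_absorb)
    have "b (Suc i) \<in> fund_circuit M (z (Suc i)) I" using H(1,4)[OF i] unfolding fund_circuit_def by blast
    then have "b (Suc i) \<in> fund_circuit M (z (Suc i)) I1" using fc[OF i] by simp
    then show "indep M (insert (z (Suc i)) (I1 - {b (Suc i)}))" unfolding fund_circuit_def by blast
    fix j assume j: "j < i"
    have "b (Suc j) \<notin> fund_circuit M (z (Suc i)) I" using H(6)[OF i j] unfolding fund_circuit_def by blast
    then have "b (Suc j) \<notin> fund_circuit M (z (Suc i)) I1" using fc[OF i] by simp
    then show "\<not> indep M (insert (z (Suc i)) (I1 - {b (Suc j)}))"
      using b_in_I1[of j] i j unfolding fund_circuit_def by auto
  qed
qed

lemma indep_triangular_exchange: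
  assumes "indep M I" and "triangular_exchange M I k b z"
  shows "indep M ((I - b ` {..<k}) \<union> z ` {..<k}) \<and>
    (\<forall>w. in_span M I w \<longrightarrow> in_span M ((I - b ` {..<k}) \<union> z ` {..<k}) w)"
  using assms
proof (induction k arbitrary: I b z)
  case 0
  then show ?case by simp
next
  case (Suc k)
  define I1 where "I1 = insert (z 0) (I - {b 0})"
  have T0: "b 0 \<in> I" "z 0 \<notin> I" "\<not> indep M (insert (z 0) I)" "indep M I1"
    using Suc.prems(2) unfolding triangular_exchange_def I1_def by auto
  have "b (Suc i) \<in> I" if "i < k" for i using Suc.prems(2) that unfolding triangular_exchange_def by auto
  then have "z 0 \<notin> (b \<circ> Suc) ` {..<k}" using T0(2) by auto
  then have eq: "(I1 - (b \<circ> Suc) ` {..<k}) \<union> (z \<circ> Suc) ` {..<k} = (I - b ` {..<Suc k}) \<union> z ` {..<Suc k}"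
    unfolding I1_def lessThan_Suc_eq_insert_0 by auto
  have span: "in_span M I1 w" if "in_span M I w" for w
    using in_span_exchange[OF Suc.prems(1) T0(1,3)] T0(4) that unfolding I1_def by blast
  have "indep M ((I1 - (b \<circ> Suc) ` {..<k}) \<union> (z \<circ> Suc) ` {..<k}) \<and>
      (\<forall>w. in_span M I1 w \<longrightarrow> in_span M ((I1 - (b \<circ> Suc) ` {..<k}) \<union> (z \<circ> Suc) ` {..<k}) w)"
    using Suc.IH[OF T0(4)[unfolded I1_def] triangular_exchange_Suc[OF Suc.prems]] unfolding I1_def .
  then show ?case using span unfolding eq by blast
qed

end

subsection \<open>Duality and contraction\<close>

lemma matroid_eqI: "ground K = ground L \<Longrightarrow> (\<And>I. indep K I \<longleftrightarrow> indep L I) \<Longrightarrow> K = L"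
  unfolding ground_def indep_def by (simp add: prod_eq_iff fun_eq_iff)

lemma ground_dual [simp]: "ground (dual K) = ground K"
  unfolding dual_def ground_def by simp

lemma indep_dual: "indep (dual K) X \<longleftrightarrow> X \<subseteq> ground K \<and> (\<exists>B. basis K B \<and> X \<inter> B = {})"
  unfolding dual_def indep_def ground_def by simp

lemma ground_restrict [simp]: "ground (restrict K X) = X \<inter> ground K"
  unfolding restrict_def ground_def by simp

lemma indep_restrict: "indep (restrict K X) I \<longleftrightarrow> indep K I \<and> I \<subseteq> X"
  unfolding restrict_def indep_def by simp

lemma basis_restrict_iff: "basis (restrict K X) J \<longleftrightarrow> basis_in K X J"
  unfolding basis_def basis_in_def indep_restrict by blast

lemma restrict_restrict: "restrict (restrict K X) Y = restrict K (X \<inter> Y)"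
  by (rule matroid_eqI) (auto simp: indep_restrict)

lemma ground_contract: "ground (contract K X) = ground K - X"
  unfolding contract_def by auto

lemma basis_dual_iff:
  assumes "\<And>I. indep K I \<Longrightarrow> I \<subseteq> ground K"
  shows "basis (dual K) D \<longleftrightarrow> (\<exists>B. basis K B \<and> D = ground K - B)"
proof
  assume D: "basis (dual K) D"
  then obtain B where B: "basis K B" "D \<inter> B = {}" "D \<subseteq> ground K"
    unfolding basis_def indep_dual by blast
  have "indep (dual K) (ground K - B)" unfolding indep_dual using B by blast
  moreover have "D \<subseteq> ground K - B" using B by blast
  ultimately have "ground K - B = D" using D unfolding basis_def by blast
  then show "\<exists>B. basis K B \<and> D = ground K - B" using B by blast
next
  assume "\<exists>B. basis K B \<and> D = ground K - B"
  then obtain B where B: "basis K B" "D = ground K - B" by blast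
  have "indep (dual K) D" unfolding indep_dual using B by blast
  moreover have "I = D" if I: "indep (dual K) I" "D \<subseteq> I" for I
  proof -
    obtain B' where B': "basis K B'" "I \<inter> B' = {}" "I \<subseteq> ground K" using I unfolding indep_dual by blast
    have "B' \<subseteq> ground K" using assms B' unfolding basis_def by blast
    then have "B' \<subseteq> B" using B' I B by blast
    then have "B' = B" using B' B unfolding basis_def by blast
    then show "I = D" using B B' I by blast
  qed
  ultimately show "basis (dual K) D" unfolding basis_def by blast
qed

lemma dual_dual:
  assumes indep_ground: "\<And>I. indep K I \<Longrightarrow> I \<subseteq> ground K"
    and subset: "\<And>I J. indep K J \<Longrightarrow> I \<subseteq> J \<Longrightarrow> indep K I"
    and extend: "\<And>I. indep K I \<Longrightarrow> \<exists>B. basis K B \<and> I \<subseteq> B"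
  shows "dual (dual K) = K"
proof (rule matroid_eqI)
  show "ground (dual (dual K)) = ground K" by simp
  fix X
  have "indep (dual (dual K)) X \<longleftrightarrow> X \<subseteq> ground K \<and> (\<exists>B. basis (dual K) B \<and> X \<inter> B = {})"
    unfolding indep_dual[of "dual K"] by simp
  also have "\<dots> \<longleftrightarrow> X \<subseteq> ground K \<and> (\<exists>B. basis K B \<and> X \<inter> (ground K - B) = {})"
    by (auto simp: basis_dual_iff[OF indep_ground])
  also have "\<dots> \<longleftrightarrow> indep K X"
  proof
    assume "X \<subseteq> ground K \<and> (\<exists>B. basis K B \<and> X \<inter> (ground K - B) = {})"
    then obtain B where "basis K B" "X \<subseteq> B" by blast
    then show "indep K X" using subset unfolding basis_def by blast
  next
    assume "indep K X"
    then obtain B where "basis K B" "X \<subseteq> B" using extend by blast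
    moreover have "B \<subseteq> ground K" using indep_ground \<open>basis K B\<close> unfolding basis_def by blast
    ultimately show "X \<subseteq> ground K \<and> (\<exists>B. basis K B \<and> X \<inter> (ground K - B) = {})" by blast
  qed
  finally show "indep (dual (dual K)) X \<longleftrightarrow> indep K X" .
qed

context
  fixes M :: "'a matroid"
  assumes M: "matroid M"
begin

lemma basis_in_Int_superset:
  assumes J: "basis_in M X J" and B: "indep M B" "J \<subseteq> B"
  shows "basis_in M X (B \<inter> X)"
proof (rule basis_inI[OF M])
  show "indep M (B \<inter> X)" by (rule indep_subset[OF M B(1)]) blast
  fix x assume "x \<in> X" "x \<notin> B \<inter> X"
  then have "\<not> indep M (insert x J)" using basis_inD[OF J] B(2) by blast
  moreover have "insert x J \<subseteq> insert x (B \<inter> X)" using B(2) basis_in_subset[OF J] by blast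
  ultimately show "\<not> indep M (insert x (B \<inter> X))" using indep_subset[OF M] by blast
next
  show "B \<inter> X \<subseteq> X" by blast
qed

lemma basis_in_dual_complement:
  assumes B: "basis M B" and BX: "basis_in M X (B \<inter> X)"
  shows "basis_in (dual M) (ground M - X) ((ground M - X) - B)"
proof -
  have "K = (ground M - X) - B"
    if K: "indep (dual M) K" "(ground M - X) - B \<subseteq> K" "K \<subseteq> ground M - X" for K
  proof (rule ccontr)
    assume "K \<noteq> (ground M - X) - B"
    then obtain b where b: "b \<in> K" "b \<in> B" using K(2,3) by blast
    obtain B' where B': "basis M B'" "K \<inter> B' = {}" using K(1) unfolding indep_dual by blast
    have indep_B: "indep M (B - {b})" using B indep_subset[OF M, of B "B - {b}"] unfolding basis_def by blast
    have "basis M (B - {b})"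
    proof (rule basis_if_spans_basis[OF M indep_B B'(1)])
      fix x assume x: "x \<in> B'" "x \<notin> B - {b}"
      then have "x \<in> X" "x \<notin> B" using B' b K(2) basis_subset_ground[OF M B'(1)] by blast+
      then have "\<not> indep M (insert x (B \<inter> X))" using basis_inD[OF BX] by blast
      moreover have "insert x (B \<inter> X) \<subseteq> insert x (B - {b})" using b K(3) by blast
      ultimately show "\<not> indep M (insert x (B - {b}))" using indep_subset[OF M] by blast
    qed
    then show False using B b(2) unfolding basis_def by blast
  qed
  moreover have "indep (dual M) ((ground M - X) - B)" unfolding indep_dual using B by blast
  ultimately show ?thesis unfolding basis_in_def by blast
qed

lemma basis_disjoint_with_basis_in:
  assumes X: "X \<subseteq> ground M" and I: "I \<subseteq> ground M - X" and B0: "basis M B0" "I \<inter> B0 = {}"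
  shows "\<exists>B. basis M B \<and> basis_in M X (B \<inter> X) \<and> I \<inter> B = {}"
proof -
  obtain J where J: "basis_in M X J" using basis_in_extend[OF M indep_empty[OF M] _ X] by blast
  have "\<exists>B. basis M B \<and> J \<subseteq> B \<and> B \<subseteq> ground M - I"
  proof (rule basis_extend_within[OF M basis_in_indep[OF J] _ _ B0(1)])
    show "J \<subseteq> ground M - I" using basis_in_subset[OF J] X I by blast
    fix p assume "p \<in> B0 - (ground M - I)"
    then show "in_span M J p" using B0 basis_subset_ground[OF M B0(1)] by blast
  qed blast
  then obtain B where B: "basis M B" "J \<subseteq> B" "B \<subseteq> ground M - I" by blast
  have "basis_in M X (B \<inter> X)"
    using basis_in_Int_superset[OF J _ B(2)] B(1) unfolding basis_def by blast
  then show ?thesis using B(1,3) by blast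
qed

lemma basis_in_dual_iff:
  assumes X: "X \<subseteq> ground M"
  shows "basis_in (dual M) (ground M - X) D \<longleftrightarrow>
    (\<exists>B. basis M B \<and> basis_in M X (B \<inter> X) \<and> D = (ground M - X) - B)"
proof
  assume D: "basis_in (dual M) (ground M - X) D"
  then obtain B0 where B0: "basis M B0" "D \<inter> B0 = {}" and DX: "D \<subseteq> ground M - X"
    unfolding basis_in_def indep_dual by blast
  obtain B where B: "basis M B" "basis_in M X (B \<inter> X)" "D \<inter> B = {}"
    using basis_disjoint_with_basis_in[OF X DX B0] by blast
  have "basis_in (dual M) (ground M - X) ((ground M - X) - B)"
    using basis_in_dual_complement[OF B(1,2)] .
  then have "(ground M - X) - B = D" using D DX B(3) unfolding basis_in_def by blast
  then show "\<exists>B. basis M B \<and> basis_in M X (B \<inter> X) \<and> D = (ground M - X) - B" using B by metis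
next
  assume "\<exists>B. basis M B \<and> basis_in M X (B \<inter> X) \<and> D = (ground M - X) - B"
  then show "basis_in (dual M) (ground M - X) D" using basis_in_dual_complement by blast
qed

text \<open>Independence in \<open>M / X\<close> does not depend on the chosen base of \<open>X\<close>.\<close>
lemma indep_union_basis_in_swap:
  assumes J: "basis_in M X J" and J': "basis_in M X J'" and IJ: "indep M (I \<union> J)" and IX: "I \<inter> X = {}"
  shows "indep M (I \<union> J')"
proof (rule ccontr)
  assume dep: "\<not> indep M (I \<union> J')"
  have "I \<union> J' \<subseteq> ground M"
    using indep_subset_ground[OF M IJ] indep_subset_ground[OF M basis_in_indep[OF J']] by blast
  then obtain K where K: "basis_in M (I \<union> J') K" "J' \<subseteq> K"
    using basis_in_extend[OF M basis_in_indep[OF J']] by blast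
  have "K \<noteq> I \<union> J'" using dep basis_in_indep[OF K(1)] by metis
  then obtain i where i: "i \<in> I" "i \<notin> K" using K(2) basis_in_subset[OF K(1)] by blast
  define T where "T = (I - {i}) \<union> J"
  have indep_T: "indep M T" by (rule indep_subset[OF M IJ]) (auto simp: T_def)
  have "in_span M T k" if k: "k \<in> K" for k
  proof (cases "k \<in> I \<union> J")
    case True
    then show ?thesis using k i unfolding in_span_def T_def by blast
  next
    case False
    then have "k \<in> X" "k \<notin> J" using k basis_in_subset[OF K(1)] basis_in_subset[OF J'] by auto
    then have "\<not> indep M (insert k J)" using basis_inD[OF J] by blast
    moreover have "insert k J \<subseteq> insert k T" unfolding T_def by blast
    ultimately show ?thesis using indep_subset[OF M] unfolding in_span_def by blast
  qed
  moreover have "in_span M K i" using basis_inD[OF K(1)] i unfolding in_span_def by blast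
  ultimately have "in_span M T i"
    using in_span_trans[OF M indep_T _ order_refl basis_in_indep[OF K(1)]] by blast
  moreover have "i \<notin> T" using i IX basis_in_subset[OF J] unfolding T_def by blast
  moreover have "insert i T = I \<union> J" using i unfolding T_def by blast
  ultimately show False using IJ unfolding in_span_def by simp
qed

lemma indep_contract_iff:
  assumes X: "X \<subseteq> ground M"
  shows "indep (contract M X) I \<longleftrightarrow> I \<subseteq> ground M - X \<and> (\<exists>J. basis_in M X J \<and> indep M (I \<union> J))"
proof -
  have "indep (contract M X) I \<longleftrightarrow> I \<subseteq> ground M - X \<and>
      (\<exists>B. basis M B \<and> basis_in M X (B \<inter> X) \<and> I \<inter> ((ground M - X) - B) = {})"
    unfolding contract_def indep_dual basis_restrict_iff basis_in_dual_iff[OF X] by auto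
  moreover have "\<exists>J. basis_in M X J \<and> indep M (I \<union> J)"
    if "I \<subseteq> ground M - X" "basis M B" "basis_in M X (B \<inter> X)" "I \<inter> ((ground M - X) - B) = {}" for B
  proof -
    have "I \<union> (B \<inter> X) \<subseteq> B" using that by blast
    then have "indep M (I \<union> (B \<inter> X))" using that(2) indep_subset[OF M] unfolding basis_def by blast
    then show ?thesis using that(3) by blast
  qed
  moreover have "\<exists>B. basis M B \<and> basis_in M X (B \<inter> X) \<and> I \<inter> ((ground M - X) - B) = {}"
    if J: "basis_in M X J" "indep M (I \<union> J)" for J
  proof -
    obtain B where B: "basis_in M (ground M) B" "I \<union> J \<subseteq> B"
      using basis_in_extend[OF M J(2) indep_subset_ground[OF M J(2)] order_refl] by blast
    have "basis_in M X (B \<inter> X)" using basis_in_Int_superset[OF J(1) basis_in_indep[OF B(1)]] B(2) by blast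
    then show ?thesis using B basis_iff_basis_in_ground[OF M] by blast
  qed
  ultimately show ?thesis by blast
qed

lemma dual_dual_restrict_dual:
  assumes X: "X \<subseteq> ground M"
  shows "dual (dual (restrict (dual M) (ground M - X))) = restrict (dual M) (ground M - X)"
    (is "dual (dual ?R) = ?R")
proof (rule dual_dual)
  show "I \<subseteq> ground ?R" if "indep ?R I" for I
    using that unfolding indep_restrict indep_dual by simp
  show "indep ?R I" if "indep ?R J" "I \<subseteq> J" for I J
    using that unfolding indep_restrict indep_dual by blast
  show "\<exists>B. basis ?R B \<and> I \<subseteq> B" if I: "indep ?R I" for I
  proof -
    obtain B0 where B0: "basis M B0" "I \<inter> B0 = {}" "I \<subseteq> ground M - X"
      using I unfolding indep_restrict indep_dual by blast
    obtain B where B: "basis M B" "basis_in M X (B \<inter> X)" "I \<inter> B = {}"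
      using basis_disjoint_with_basis_in[OF X B0(3,1,2)] by blast
    have "basis ?R ((ground M - X) - B)"
      unfolding basis_restrict_iff using basis_in_dual_complement[OF B(1,2)] .
    moreover have "I \<subseteq> (ground M - X) - B" using B(3) B0(3) by blast
    ultimately show ?thesis by blast
  qed
qed

lemma contract_contract:
  assumes X: "X \<subseteq> ground M"
  shows "contract (contract M X) Y = contract M (X \<union> Y)"
proof -
  have "contract (contract M X) Y =
      dual (restrict (restrict (dual M) (ground M - X)) (ground M - X - Y))"
    unfolding contract_def[of "contract M X"] ground_contract
    by (simp only: contract_def[of M] dual_dual_restrict_dual[OF X])
  also have "\<dots> = contract M (X \<union> Y)"
  proof -
    have "(ground M - X) \<inter> (ground M - X - Y) = ground M - (X \<union> Y)" by blast
    then show ?thesis unfolding restrict_restrict contract_def by simp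
  qed
  finally show ?thesis .
qed

lemma indep_union_if_indep_contract:
  assumes X: "X \<subseteq> ground M" and I: "indep (contract M X) I" and J: "basis_in M X J"
  shows "indep M (I \<union> J)"
proof -
  obtain J' where J': "basis_in M X J'" "indep M (I \<union> J')" and "I \<subseteq> ground M - X"
    using I unfolding indep_contract_iff[OF X] by blast
  show ?thesis by (rule indep_union_basis_in_swap[OF J'(1) J J'(2)]) (use \<open>I \<subseteq> ground M - X\<close> in blast)
qed

lemma in_span_if_basis_in_contract:
  assumes X: "X \<subseteq> ground M" and I: "basis_in (contract M X) Y I" and J: "basis_in M X J"
    and Y: "Y \<subseteq> ground M - X" and y: "y \<in> Y"
  shows "in_span M (I \<union> J) y"
proof (rule ccontr)
  assume "\<not> in_span M (I \<union> J) y"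
  then have y_I: "y \<notin> I" and indep_y: "indep M (insert y I \<union> J)" unfolding in_span_def by auto
  have "insert y I \<subseteq> ground M - X" using basis_in_subset[OF I] Y y by blast
  then have "indep (contract M X) (insert y I)" unfolding indep_contract_iff[OF X] using J indep_y by blast
  then show False using basis_inD[OF I y y_I] by blast
qed

lemma basis_contract_if_maximal:
  assumes X: "X \<subseteq> ground M" and J: "basis_in M X J" and I: "I \<subseteq> ground M - X" "indep M (I \<union> J)"
    and max: "\<And>x. x \<in> ground M - X \<Longrightarrow> x \<notin> I \<Longrightarrow> \<not> indep M (insert x (I \<union> J))"
  shows "basis (contract M X) I"
  unfolding basis_def
proof (intro conjI allI impI)
  show "indep (contract M X) I" unfolding indep_contract_iff[OF X] using I J by blast
  fix I' assume I': "indep (contract M X) I' \<and> I \<subseteq> I'"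
  then have I'_ground: "I' \<subseteq> ground M - X" unfolding indep_contract_iff[OF X] by blast
  have indep_I': "indep M (I' \<union> J)" using indep_union_if_indep_contract[OF X _ J] I' by blast
  show "I' = I"
  proof (rule ccontr)
    assume "I' \<noteq> I"
    then obtain x where x: "x \<in> I'" "x \<notin> I" using I' by blast
    have "indep M (insert x (I \<union> J))" by (rule indep_subset[OF M indep_I']) (use x I' in blast)
    then show False using max[of x] x I'_ground by blast
  qed
qed

end

subsection \<open>Waves under \<open>cond\<^sup>+\<close>\<close>

lemma waveI:
  assumes N: "matroid N" and A: "A \<subseteq> ground M" and I: "basis_in M A I"
    and J: "basis_in N (ground N - A) J" and IJ: "indep N (I \<union> J)"
  shows "wave M N A"
  unfolding wave_def
proof (intro conjI exI)
  show "A \<subseteq> ground M" by (rule A)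
  show "basis (restrict M A) I" unfolding basis_restrict_iff by (rule I)
  have sub: "ground N - A \<subseteq> ground N" by blast
  have "I \<subseteq> ground N - (ground N - A)"
    using basis_in_subset[OF I] indep_subset_ground[OF N IJ] by blast
  then show "indep (contract_to N A) I"
    unfolding contract_to_def indep_contract_iff[OF N sub] using J IJ by blast
qed

lemma cond_plus_wave_loop:
  assumes "cond_plus M N" and "wave M N A" and "x \<in> A"
  shows "\<not> indep M {x}"
  using assms unfolding cond_plus_def wave_union_def loop_def by blast

text \<open>Since \<open>N.W(M,N)\<close> has rank 0, every wave is spanned in \<open>N\<close> by the rest of the ground set.\<close>
lemma cond_plus_wave_dependent:
  assumes N: "matroid N" and ground: "ground M = E" "ground N = E" and cond: "cond_plus M N"
    and A: "wave M N A" and J: "basis_in N (E - A) J" and x: "x \<in> A"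
  shows "\<not> indep N (insert x J)"
proof
  assume indep_x: "indep N (insert x J)"
  define U where "U = wave_union M N"
  have AU: "A \<subseteq> U" using A unfolding U_def wave_union_def by blast
  have UE: "U \<subseteq> E" using ground unfolding U_def wave_union_def wave_def by blast
  obtain J0 where J0: "basis_in N (E - U) J0"
    using basis_in_extend[OF N indep_empty[OF N], of "E - U"] ground by blast
  obtain J1 where J1: "basis_in N (E - A) J1" "J0 \<subseteq> J1"
    using basis_in_extend[OF N basis_in_indep[OF J0], of "E - A"] basis_in_subset[OF J0] AU ground
    by blast
  have "indep N ({x} \<union> J1)"
    using indep_union_basis_in_swap[OF N J J1(1), of "{x}"] indep_x x by simp
  then have "indep N ({x} \<union> J0)" by (rule indep_subset[OF N]) (use J1(2) in blast)
  moreover have "{x} \<subseteq> ground N - (E - U)" and sub: "E - U \<subseteq> ground N" using x AU UE ground by auto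
  ultimately have "indep (contract N (E - U)) {x}"
    unfolding indep_contract_iff[OF N sub] using J0 by blast
  moreover have "basis (contract N (E - U)) {}"
    using cond ground unfolding cond_plus_def contract_to_def U_def by simp
  ultimately show False unfolding basis_def by blast
qed

subsection \<open>The exchange graph\<close>

lemma image_reverse_lessThan: "(\<lambda>r. f (k - Suc r)) ` {..<k} = f ` {..<(k::nat)}"
proof -
  have "(\<lambda>r. k - Suc r) ` {..<k} = {..<k}"
  proof
    show "{..<k} \<subseteq> (\<lambda>r. k - Suc r) ` {..<k}"
    proof
      fix x assume "x \<in> {..<k}"
      then have "x = k - Suc (k - Suc x)" "k - Suc x \<in> {..<k}" by auto
      then show "x \<in> (\<lambda>r. k - Suc r) ` {..<k}" by blast
    qed
  qed auto
  then show ?thesis by (metis image_image)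
qed

text \<open>The exchange graph of the pair \<open>(M \<upharpoonright> W, N.W)\<close> at a common independent set \<open>B\<close>: independence
of \<open>B\<close> in \<open>N.W\<close> is encoded by independence of \<open>B \<union> J\<close> in \<open>N\<close> for a base \<open>J\<close> of \<open>E - W\<close>.\<close>
locale exchange_graph =
  fixes M N :: "'a matroid" and E W B J :: "'a set"
  assumes matroid_M: "matroid M" and matroid_N: "matroid N"
    and ground_M: "ground M = E" and ground_N: "ground N = E"
    and W_subset: "W \<subseteq> E" and B_subset: "B \<subseteq> W" and indep_B: "indep M B"
    and basis_J: "basis_in N (E - W) J" and indep_BJ: "indep N (B \<union> J)"
begin

definition sources :: "'a set" where
  "sources = {y \<in> W - B. indep M (insert y B)}"

definition sinks :: "'a set" where
  "sinks = {x \<in> W - B. indep N (insert x (B \<union> J))}"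

definition N_edge :: "'a \<Rightarrow> 'a \<Rightarrow> bool" where
  "N_edge z b \<longleftrightarrow> z \<in> W - B \<and> b \<in> B \<and> indep N (insert z ((B - {b}) \<union> J))"

definition M_edge :: "'a \<Rightarrow> 'a \<Rightarrow> bool" where
  "M_edge b z \<longleftrightarrow> b \<in> B \<and> z \<in> W - B \<and> indep M (insert z (B - {b}))"

definition alt_path :: "nat \<Rightarrow> (nat \<Rightarrow> 'a) \<Rightarrow> (nat \<Rightarrow> 'a) \<Rightarrow> bool" where
  "alt_path k z b \<longleftrightarrow> z 0 \<in> sources \<and> (\<forall>i<k. N_edge (z i) (b i) \<and> M_edge (b i) (z (Suc i)))"

definition reach_W :: "'a set" where
  "reach_W = {v. \<exists>k z b. alt_path k z b \<and> v = z k}"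

definition reach_B :: "'a set" where
  "reach_B = {v. \<exists>k z b. alt_path k z b \<and> N_edge (z k) v}"

definition shortest_path :: "nat \<Rightarrow> (nat \<Rightarrow> 'a) \<Rightarrow> (nat \<Rightarrow> 'a) \<Rightarrow> bool" where
  "shortest_path k z b \<longleftrightarrow> alt_path k z b \<and> z k \<in> sinks \<and>
     (\<forall>k' z' b'. alt_path k' z' b' \<and> z' k' \<in> sinks \<longrightarrow> k \<le> k')"

lemma alt_path_in_W_minus_B:
  assumes "alt_path k z b" "n \<le> k"
  shows "z n \<in> W - B"
proof (cases n)
  case 0
  then show ?thesis using assms unfolding alt_path_def sources_def by auto
next
  case (Suc m)
  then show ?thesis using assms unfolding alt_path_def M_edge_def by auto
qed

lemma reach_W_subset: "reach_W \<subseteq> W - B"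
  unfolding reach_W_def using alt_path_in_W_minus_B by blast

lemma reach_B_subset: "reach_B \<subseteq> B"
  unfolding reach_B_def N_edge_def by blast

lemma sources_subset_reach_W: "sources \<subseteq> reach_W"
proof
  fix y assume "y \<in> sources"
  then have "alt_path 0 (\<lambda>_. y) (\<lambda>_. y)" unfolding alt_path_def by simp
  then show "y \<in> reach_W" unfolding reach_W_def by blast
qed

lemma reach_W_if_M_edge:
  assumes b: "b \<in> reach_B" and edge: "M_edge b y"
  shows "y \<in> reach_W"
proof -
  obtain k z bs where path: "alt_path k z bs" and last: "N_edge (z k) b" using b unfolding reach_B_def by blast
  have "alt_path (Suc k) (z(Suc k := y)) (bs(k := b))"
    using path last edge unfolding alt_path_def by (auto simp: less_Suc_eq)
  then show ?thesis unfolding reach_W_def by fastforce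
qed

lemma reach_B_if_N_edge: "z \<in> reach_W \<Longrightarrow> N_edge z b \<Longrightarrow> b \<in> reach_B"
  unfolding reach_W_def reach_B_def by blast

lemma shortest_path_exists:
  assumes "reach_W \<inter> sinks \<noteq> {}"
  shows "\<exists>k z b. shortest_path k z b"
proof -
  define P where "P k \<longleftrightarrow> (\<exists>z b. alt_path k z b \<and> z k \<in> sinks)" for k
  have "\<exists>k. P k" using assms unfolding reach_W_def P_def by blast
  then obtain k where "P k" and "\<And>m. m < k \<Longrightarrow> \<not> P m" unfolding exists_least_iff[of P] by blast
  then show ?thesis unfolding shortest_path_def P_def by (meson not_le)
qed

lemma disjoint_B_J: "B \<inter> J = {}"
  using basis_in_subset[OF basis_J] B_subset by blast

context
  fixes k :: nat and z b :: "nat \<Rightarrow> 'a"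
  assumes shortest: "shortest_path k z b"
begin

lemma shortest_path_N_edge: "i < k \<Longrightarrow> N_edge (z i) (b i)"
  using shortest unfolding shortest_path_def alt_path_def by blast

lemma shortest_path_M_edge: "i < k \<Longrightarrow> M_edge (b i) (z (Suc i))"
  using shortest unfolding shortest_path_def alt_path_def by blast

lemma shortest_path_minimal: "alt_path k' z' b' \<Longrightarrow> z' k' \<in> sinks \<Longrightarrow> k \<le> k'"
  using shortest unfolding shortest_path_def by blast

lemma shortest_path_source: "z 0 \<in> sources"
  using shortest unfolding shortest_path_def alt_path_def by blast

lemma shortest_path_sink: "z k \<in> sinks"
  using shortest unfolding shortest_path_def by blast

lemma shortest_path_in_W_minus_B: "i \<le> k \<Longrightarrow> z i \<in> W - B"
  using shortest alt_path_in_W_minus_B unfolding shortest_path_def by blast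

lemma shortest_path_not_source:
  assumes i: "0 < i" "i \<le> k"
  shows "z i \<notin> sources"
proof
  assume "z i \<in> sources"
  then have "alt_path (k - i) (\<lambda>n. z (n + i)) (\<lambda>n. b (n + i))"
    unfolding alt_path_def using shortest_path_N_edge shortest_path_M_edge by auto
  moreover have "z (k - i + i) \<in> sinks" using shortest_path_sink i by simp
  ultimately show False using shortest_path_minimal i by fastforce
qed

lemma shortest_path_not_sink:
  assumes i: "i < k"
  shows "z i \<notin> sinks"
proof
  assume "z i \<in> sinks"
  moreover have "alt_path i z b"
    using shortest i unfolding shortest_path_def alt_path_def by simp
  ultimately show False using shortest_path_minimal i by fastforce
qed

lemma shortest_path_no_M_shortcut:
  assumes ji: "Suc j < i" "i \<le> k"
  shows "\<not> M_edge (b j) (z i)"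
proof
  assume edge: "M_edge (b j) (z i)"
  define s where "s = i - Suc j"
  define z' where "z' n = (if n \<le> j then z n else z (n + s))" for n
  define b' where "b' n = (if n \<le> j then b n else b (n + s))" for n
  have "alt_path (k - s) z' b'"
    unfolding alt_path_def
  proof (intro conjI allI impI)
    show "z' 0 \<in> sources" using shortest_path_source unfolding z'_def by simp
    fix n assume n: "n < k - s"
    show "N_edge (z' n) (b' n)"
      using shortest_path_N_edge[of n] shortest_path_N_edge[of "n + s"] n ji
      unfolding z'_def b'_def s_def by auto
    show "M_edge (b' n) (z' (Suc n))"
    proof (cases "n = j")
      case True
      then show ?thesis using edge ji unfolding z'_def b'_def s_def by simp
    next
      case False
      then show ?thesis
        using shortest_path_M_edge[of n] shortest_path_M_edge[of "n + s"] n ji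
        unfolding z'_def b'_def s_def by auto
    qed
  qed
  moreover have "z' (k - s) = z k" using ji unfolding z'_def s_def by simp
  ultimately show False
    using shortest_path_minimal[of "k - s" z' b'] shortest_path_sink ji unfolding s_def by simp
qed

lemma shortest_path_no_N_shortcut:
  assumes ij: "i < j" "j < k"
  shows "\<not> N_edge (z i) (b j)"
proof
  assume edge: "N_edge (z i) (b j)"
  define s where "s = j - i"
  define z' where "z' n = (if n \<le> i then z n else z (n + s))" for n
  define b' where "b' n = (if n < i then b n else b (n + s))" for n
  have "alt_path (k - s) z' b'"
    unfolding alt_path_def
  proof (intro conjI allI impI)
    show "z' 0 \<in> sources" using shortest_path_source unfolding z'_def by simp
    fix n assume n: "n < k - s"
    show "N_edge (z' n) (b' n)"
    proof (cases "n = i")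
      case True
      then show ?thesis using edge ij unfolding z'_def b'_def s_def by simp
    next
      case False
      then show ?thesis
        using shortest_path_N_edge[of n] shortest_path_N_edge[of "n + s"] n ij
        unfolding z'_def b'_def s_def by auto
    qed
    show "M_edge (b' n) (z' (Suc n))"
      using shortest_path_M_edge[of n] shortest_path_M_edge[of "n + s"] n ij
      unfolding z'_def b'_def s_def by auto
  qed
  moreover have "z' (k - s) = z k" using ij unfolding z'_def s_def by simp
  ultimately show False
    using shortest_path_minimal[of "k - s" z' b'] shortest_path_sink ij unfolding s_def by simp
qed

lemma shortest_path_triangular_M:
  "triangular_exchange M (insert (z 0) B) k b (z \<circ> Suc)"
  unfolding triangular_exchange_def o_def
proof (intro allI impI conjI)
  let ?I = "insert (z 0) B"
  fix i assume i: "i < k"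
  have z_W: "z (Suc i) \<in> W - B" using shortest_path_in_W_minus_B i by simp
  have "z (Suc i) \<notin> sources" using shortest_path_not_source i by simp
  then have dep_B: "\<not> indep M (insert (z (Suc i)) B)" using z_W unfolding sources_def by blast
  have indep_I: "indep M ?I" using shortest_path_source unfolding sources_def by blast
  show "b i \<in> ?I" using shortest_path_N_edge[OF i] unfolding N_edge_def by blast
  show "z (Suc i) \<notin> ?I"
    using z_W \<open>z (Suc i) \<notin> sources\<close> shortest_path_source by auto
  show dep_I: "\<not> indep M (insert (z (Suc i)) ?I)"
    using dep_B indep_subset[OF matroid_M, of "insert (z (Suc i)) ?I" "insert (z (Suc i)) B"] by blast
  have fc: "fund_circuit M (z (Suc i)) B = fund_circuit M (z (Suc i)) ?I"
    by (rule fund_circuit_eq[OF matroid_M indep_B dep_B indep_I dep_I])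
      (use fund_circuit_subset[of M "z (Suc i)" B] in blast)
  have "b i \<in> fund_circuit M (z (Suc i)) B"
    using shortest_path_M_edge[OF i] unfolding M_edge_def fund_circuit_def by blast
  then have "b i \<in> fund_circuit M (z (Suc i)) ?I" unfolding fc .
  then show "indep M (insert (z (Suc i)) (?I - {b i}))" unfolding fund_circuit_def by blast
  fix j assume j: "j < i"
  have "\<not> M_edge (b j) (z (Suc i))" using shortest_path_no_M_shortcut i j by simp
  then have "b j \<notin> fund_circuit M (z (Suc i)) B"
    using shortest_path_N_edge[of j] i j z_W
    unfolding M_edge_def N_edge_def fund_circuit_def by auto
  then have "b j \<notin> fund_circuit M (z (Suc i)) ?I" unfolding fc .
  moreover have "b j \<in> ?I" using shortest_path_N_edge[of j] i j unfolding N_edge_def by simp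
  ultimately show "\<not> indep M (insert (z (Suc i)) (?I - {b j}))" unfolding fund_circuit_def by blast
qed

lemma shortest_path_triangular_N:
  "triangular_exchange N (insert (z k) (B \<union> J)) k (\<lambda>r. b (k - Suc r)) (\<lambda>r. z (k - Suc r))"
  unfolding triangular_exchange_def
proof (intro allI impI conjI)
  let ?I = "insert (z k) (B \<union> J)"
  fix r assume r: "r < k"
  define m where "m = k - Suc r"
  have m: "m < k" using r unfolding m_def by simp
  have z_W: "z m \<in> W - B" using shortest_path_in_W_minus_B m by simp
  have z_BJ: "z m \<notin> B \<union> J" using z_W basis_in_subset[OF basis_J] by blast
  have "z m \<notin> sinks" using shortest_path_not_sink[OF m] .
  then have dep_BJ: "\<not> indep N (insert (z m) (B \<union> J))" using z_W unfolding sinks_def by blast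
  have indep_I: "indep N ?I" using shortest_path_sink unfolding sinks_def by blast
  have b_B: "b m \<in> B" using shortest_path_N_edge[OF m] unfolding N_edge_def by blast
  show "b (k - Suc r) \<in> ?I" using b_B unfolding m_def by blast
  show "z (k - Suc r) \<notin> ?I"
    using z_BJ \<open>z m \<notin> sinks\<close> shortest_path_sink unfolding m_def by auto
  show dep_I: "\<not> indep N (insert (z (k - Suc r)) ?I)"
    using dep_BJ indep_subset[OF matroid_N, of "insert (z m) ?I" "insert (z m) (B \<union> J)"]
    unfolding m_def by blast
  have fc: "fund_circuit N (z m) (B \<union> J) = fund_circuit N (z m) ?I"
    by (rule fund_circuit_eq[OF matroid_N indep_BJ dep_BJ indep_I dep_I[folded m_def]])
      (use fund_circuit_subset[of N "z m" "B \<union> J"] in blast)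
  have B_J_minus: "(B - {b'}) \<union> J = (B \<union> J) - {b'}" if "b' \<in> B" for b'
    using that disjoint_B_J by blast
  have "b m \<in> fund_circuit N (z m) (B \<union> J)"
    using shortest_path_N_edge[OF m] B_J_minus[OF b_B] unfolding N_edge_def fund_circuit_def by auto
  then have "b m \<in> fund_circuit N (z m) ?I" unfolding fc .
  then show "indep N (insert (z (k - Suc r)) (?I - {b (k - Suc r)}))"
    unfolding fund_circuit_def m_def by blast
  fix j assume j: "j < r"
  define m' where "m' = k - Suc j"
  have mm: "m < m'" "m' < k" using r j unfolding m_def m'_def by auto
  have b'_B: "b m' \<in> B" using shortest_path_N_edge[OF mm(2)] unfolding N_edge_def by blast
  have "\<not> N_edge (z m) (b m')" using shortest_path_no_N_shortcut[OF mm] .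
  then have "b m' \<notin> fund_circuit N (z m) (B \<union> J)"
    using z_W b'_B B_J_minus[OF b'_B] unfolding N_edge_def fund_circuit_def by auto
  then have "b m' \<notin> fund_circuit N (z m) ?I" unfolding fc .
  moreover have "b m' \<in> ?I" using b'_B by blast
  ultimately show "\<not> indep N (insert (z (k - Suc r)) (?I - {b (k - Suc j)}))"
    unfolding fund_circuit_def m_def m'_def by blast
qed

lemma shortest_path_augment:
  "indep M ((B - b ` {..<k}) \<union> z ` {..k})"
  "\<And>w. in_span M (insert (z 0) B) w \<Longrightarrow> in_span M ((B - b ` {..<k}) \<union> z ` {..k}) w"
  "indep N ((B - b ` {..<k}) \<union> z ` {..k} \<union> J)"
proof -
  have b_B: "b ` {..<k} \<subseteq> B" using shortest_path_N_edge unfolding N_edge_def by blast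
  have z_B: "z 0 \<notin> B" "z k \<notin> B" using shortest_path_in_W_minus_B by auto
  have "{..k} = insert 0 (Suc ` {..<k})"
    by (simp only: lessThan_Suc_atMost[symmetric] lessThan_Suc_eq_insert_0)
  then have eq_M: "(insert (z 0) B - b ` {..<k}) \<union> (z \<circ> Suc) ` {..<k} = (B - b ` {..<k}) \<union> z ` {..k}"
    using b_B z_B by (auto simp: image_comp)
  have "indep M (insert (z 0) B)" using shortest_path_source unfolding sources_def by blast
  from indep_triangular_exchange[OF matroid_M this shortest_path_triangular_M]
  show "indep M ((B - b ` {..<k}) \<union> z ` {..k})"
    "\<And>w. in_span M (insert (z 0) B) w \<Longrightarrow> in_span M ((B - b ` {..<k}) \<union> z ` {..k}) w"
    unfolding eq_M by blast+
  have "z ` {..k} = insert (z k) (z ` {..<k})" by (simp add: lessThan_Suc_atMost[symmetric] lessThan_Suc)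
  then have eq_N: "(insert (z k) (B \<union> J) - (\<lambda>r. b (k - Suc r)) ` {..<k}) \<union> (\<lambda>r. z (k - Suc r)) ` {..<k} =
      (B - b ` {..<k}) \<union> z ` {..k} \<union> J"
    unfolding image_reverse_lessThan using b_B z_B disjoint_B_J by auto
  have "indep N (insert (z k) (B \<union> J))" using shortest_path_sink unfolding sinks_def by blast
  from indep_triangular_exchange[OF matroid_N this shortest_path_triangular_N]
  show "indep N ((B - b ` {..<k}) \<union> z ` {..k} \<union> J)" unfolding eq_N by blast
qed

text \<open>Here \<open>F\<close> is a base of \<open>{e}\<close>; having at most one element, it is spanned by \<open>B + z 0\<close>.\<close>
lemma shortest_path_wave:
  assumes F: "F \<subseteq> {e}" "e \<notin> W" "indep M (B \<union> F)" "\<And>w. w \<in> W \<Longrightarrow> in_span M (B \<union> F) w"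
  shows "wave M N W"
proof -
  let ?B' = "(B - b ` {..<k}) \<union> z ` {..k}"
  have "z ` {..k} \<subseteq> W" using shortest_path_in_W_minus_B by auto
  then have B'_W: "?B' \<subseteq> W" using B_subset by blast
  have z0: "z 0 \<in> W - B" using shortest_path_in_W_minus_B by simp
  have dep_z0: "\<not> indep M (insert (z 0) (B \<union> F))" using F(1,2) F(4)[of "z 0"] z0 unfolding in_span_def by blast
  have span_F: "in_span M ?B' q" if q: "q \<in> insert (z 0) B \<union> F" for q
  proof -
    have "in_span M (insert (z 0) B) q"
    proof (cases "q \<in> insert (z 0) B")
      case False
      then have "insert q (insert (z 0) B) = insert (z 0) (B \<union> F)" using q F(1) by blast
      then show ?thesis using dep_z0 unfolding in_span_def by simp
    qed (simp add: in_span_def)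
    then show ?thesis by (rule shortest_path_augment(2))
  qed
  have basis_B': "basis_in M W ?B'"
  proof (rule basis_inI[OF matroid_M shortest_path_augment(1) B'_W])
    fix w assume w: "w \<in> W" "w \<notin> ?B'"
    have "B \<union> F \<subseteq> insert (z 0) B \<union> F" by blast
    from in_span_trans[OF matroid_M shortest_path_augment(1) span_F this F(3) F(4)[OF w(1)]]
    have "in_span M ?B' w" .
    then show "\<not> indep M (insert w ?B')" using w(2) unfolding in_span_def by blast
  qed
  have "basis_in N (ground N - W) J" using basis_J ground_N by simp
  from waveI[OF matroid_N _ basis_B' this shortest_path_augment(3)]
  show "wave M N W" using W_subset ground_M by blast
qed

end

definition unreached :: "'a set" where
  "unreached = W - (reach_W \<union> reach_B)"

lemma basis_in_unreached_M: "basis_in M unreached (B \<inter> unreached)"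
proof (rule basis_inI[OF matroid_M])
  show "indep M (B \<inter> unreached)" by (rule indep_subset[OF matroid_M indep_B]) blast
  show "B \<inter> unreached \<subseteq> unreached" by blast
  fix y assume y: "y \<in> unreached" "y \<notin> B \<inter> unreached"
  then have y_W: "y \<in> W - B" "y \<notin> reach_W" unfolding unreached_def by auto
  then have "y \<notin> sources" using sources_subset_reach_W by blast
  then have dep: "\<not> indep M (insert y B)" using y_W unfolding sources_def by blast
  have fc: "fund_circuit M y B \<subseteq> B \<inter> unreached"
  proof
    fix x assume x: "x \<in> fund_circuit M y B"
    then have "M_edge x y" using y_W unfolding M_edge_def fund_circuit_def by blast
    then have "x \<notin> reach_B" using reach_W_if_M_edge y_W(2) by blast
    moreover have "x \<in> B" using x unfolding fund_circuit_def by blast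
    ultimately show "x \<in> B \<inter> unreached" using reach_W_subset B_subset unfolding unreached_def by blast
  qed
  then show "\<not> indep M (insert y (B \<inter> unreached))"
    using dependent_if_fund_circuit_subset[OF matroid_M indep_B dep _ fc] by blast
qed

lemma basis_in_unreached_N:
  assumes no_sink: "reach_W \<inter> sinks = {}"
  shows "basis_in N (E - unreached) (J \<union> (B \<inter> reach_B))"
proof (rule basis_inI[OF matroid_N])
  show "indep N (J \<union> (B \<inter> reach_B))" by (rule indep_subset[OF matroid_N indep_BJ]) blast
  show "J \<union> (B \<inter> reach_B) \<subseteq> E - unreached"
    using basis_in_subset[OF basis_J] B_subset W_subset unfolding unreached_def by blast
  fix y assume y: "y \<in> E - unreached" "y \<notin> J \<union> (B \<inter> reach_B)"
  show "\<not> indep N (insert y (J \<union> (B \<inter> reach_B)))"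
  proof (cases "y \<in> W")
    case False
    then have "\<not> indep N (insert y J)" using basis_inD[OF basis_J] y by blast
    then show ?thesis using indep_subset[OF matroid_N, of "insert y (J \<union> (B \<inter> reach_B))" "insert y J"] by blast
  next
    case True
    then have y_reach: "y \<in> reach_W" using y reach_B_subset unfolding unreached_def by blast
    then have y_W: "y \<in> W - B" "y \<notin> sinks" using reach_W_subset no_sink by blast+
    then have dep: "\<not> indep N (insert y (B \<union> J))" unfolding sinks_def by blast
    have fc: "fund_circuit N y (B \<union> J) \<subseteq> J \<union> (B \<inter> reach_B)"
    proof
      fix x assume x: "x \<in> fund_circuit N y (B \<union> J)"
      show "x \<in> J \<union> (B \<inter> reach_B)"
      proof (cases "x \<in> J")
        case False
        then have "(B \<union> J) - {x} = (B - {x}) \<union> J" by blast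
        then have "x \<in> B" "N_edge y x" using x False y_W unfolding fund_circuit_def N_edge_def by auto
        then show ?thesis using reach_B_if_N_edge[OF y_reach] by blast
      qed blast
    qed
    show ?thesis using dependent_if_fund_circuit_subset[OF matroid_N indep_BJ dep _ fc] by blast
  qed
qed

lemma dependent_if_no_reachable_sink:
  assumes cond: "cond_plus M N" and no_sink: "reach_W \<inter> sinks = {}" and x: "x \<in> W - B"
  shows "\<not> indep N (insert x (B \<union> J))"
proof -
  have wave: "wave M N unreached"
  proof (rule waveI[OF matroid_N _ basis_in_unreached_M])
    show "unreached \<subseteq> ground M" using W_subset ground_M unfolding unreached_def by blast
    show "basis_in N (ground N - unreached) (J \<union> (B \<inter> reach_B))"
      using basis_in_unreached_N[OF no_sink] ground_N by simp
    show "indep N (B \<inter> unreached \<union> (J \<union> (B \<inter> reach_B)))"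
      by (rule indep_subset[OF matroid_N indep_BJ]) blast
  qed
  have "B \<inter> unreached = {}"
  proof (rule ccontr)
    assume "B \<inter> unreached \<noteq> {}"
    then obtain y where "y \<in> B" "y \<in> unreached" by blast
    moreover have "indep M {y}" by (rule indep_subset[OF matroid_M indep_B]) (use \<open>y \<in> B\<close> in blast)
    ultimately show False using cond_plus_wave_loop[OF cond wave] by blast
  qed
  then have J_B: "J \<union> (B \<inter> reach_B) = B \<union> J"
    using B_subset reach_W_subset unfolding unreached_def by blast
  show ?thesis
  proof (cases "x \<in> reach_W")
    case True
    then show ?thesis using no_sink x unfolding sinks_def by blast
  next
    case False
    then have "x \<in> unreached" using x reach_B_subset unfolding unreached_def by blast
    then show ?thesis
      using cond_plus_wave_dependent[OF matroid_N ground_M ground_N cond wave basis_in_unreached_N[OF no_sink]]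
      unfolding J_B by blast
  qed
qed

lemma no_reachable_sink_if_cond_plus:
  assumes cond: "cond_plus M N"
    and F: "F \<subseteq> {e}" "e \<notin> W" "indep M (B \<union> F)" "\<And>w. w \<in> W \<Longrightarrow> in_span M (B \<union> F) w"
  shows "reach_W \<inter> sinks = {}"
proof (rule ccontr)
  assume "reach_W \<inter> sinks \<noteq> {}"
  then obtain k z b where path: "shortest_path k z b" using shortest_path_exists by blast
  have "z 0 \<in> W" "indep M (insert (z 0) B)"
    using shortest_path_source[OF path] unfolding sources_def by blast+
  moreover have "indep M {z 0}" by (rule indep_subset[OF matroid_M \<open>indep M (insert (z 0) B)\<close>]) blast
  moreover have "wave M N W" using path F by (rule shortest_path_wave)
  ultimately show False using cond_plus_wave_loop[OF cond] by blast
qed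

end

lemma contract_to_contract_singleton:
  assumes N: "matroid N" and e: "e \<in> ground N" and W: "W \<subseteq> ground N - {e}"
  shows "contract_to (contract N {e}) W = contract N (ground N - W)"
proof -
  have "contract_to (contract N {e}) W = contract N ({e} \<union> (ground N - {e} - W))"
    unfolding contract_to_def ground_contract using contract_contract[OF N] e by simp
  also have "{e} \<union> (ground N - {e} - W) = ground N - W" using e W by blast
  finally show ?thesis .
qed

theorem mainTheorem7:
  fixes M N :: "'a matroid" and E W B :: "'a set" and e :: 'a
  assumes "matroid M" and "matroid N"
    and "ground M = E" and "ground N = E"
    and "cond_plus M N"
    and "e \<in> E"
    and "W \<subseteq> E - {e}"
    and "wave (contract M {e}) (contract N {e}) W"
    and "B \<subseteq> W"
    and "basis (restrict (contract M {e}) W) B"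
    and "indep (contract_to (contract N {e}) W) B"
  shows "B \<in> common_bases (contract M {e}) (contract N {e}) W"
proof -
  note M = assms(1) and N = assms(2)
  have e: "{e} \<subseteq> ground M" and W: "W \<subseteq> ground M - {e}" and EW: "E - W \<subseteq> ground N"
    using assms(3,4,6,7) by auto
  have N_W: "contract_to (contract N {e}) W = contract N (E - W)"
    using contract_to_contract_singleton[OF N] assms(4,6,7) by simp
  obtain F where F: "basis_in M {e} F" using basis_in_extend[OF M indep_empty[OF M] _ e] by blast
  obtain J where J: "basis_in N (E - W) J" using basis_in_extend[OF N indep_empty[OF N] _ EW] by blast
  have B_e: "basis_in (contract M {e}) W B" using assms(10) unfolding basis_restrict_iff .
  have BF: "indep M (B \<union> F)" using indep_union_if_indep_contract[OF M e basis_in_indep[OF B_e] F] .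
  have BJ: "indep N (B \<union> J)" using indep_union_if_indep_contract[OF N EW _ J] assms(11) N_W by simp
  interpret exchange_graph M N E W B J
    using assms(1-4,7,9) indep_subset[OF M BF] J BJ by unfold_locales auto
  have "basis (contract N (E - W)) B"
  proof (rule basis_contract_if_maximal[OF N EW J _ BJ])
    show "B \<subseteq> ground N - (E - W)" using assms(4,7,9) by blast
    fix x assume "x \<in> ground N - (E - W)" "x \<notin> B"
    then show "\<not> indep N (insert x (B \<union> J))"
      using dependent_if_no_reachable_sink[OF assms(5) no_reachable_sink_if_cond_plus[OF assms(5)]]
        basis_in_subset[OF F] assms(4,7) BF in_span_if_basis_in_contract[OF M e B_e F W] by blast
  qed
  then show ?thesis unfolding common_bases_def using assms(10) N_W by simp
qed

end
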